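(* Let $A\in\mathbb{R}^{n\times n}$ be symmetric, $Z\in\mathbb{R}^{n\times k}$, $\alpha\in\{+1,-1\}$, $\beta\in\{+1,-1\}$, and suppose that both $A$ and $A+\alpha ZZ^{T}$ are positive definite. Let $V\in\mathbb{R}^{n\times k}$ be defined by $V=Z$ if $\beta=1$ and $V=A^{-1}Z(I_k+\alpha Z^{T}A^{-1}Z)^{-1/2}$ if $\beta=-1$, and for $\tilde{C}\in\mathbb{R}^{n\times n}$ let $R(\tilde{C})=VV^{T}-A^{\beta/2}\tilde{C}-\tilde{C}A^{\beta/2}-\alpha\beta\tilde{C}^{2}$. Let $\tilde{C}$ be a positive semidefinite matrix such that $A^{\beta/2}+\alpha\beta\tilde{C}$ is positive definite. Then \[ \|(A+\alpha ZZ^{T})^{\beta/2}-(A^{\beta/2}+\alpha\beta\tilde{C})\|_{F}\leq\left(n^{1/2}\|R(\tilde{C})\|_{F}\right)^{1/2}, \] \[ \|(A+\alpha ZZ^{T})^{\beta/2}-(A^{\beta/2}+\alpha\beta\tilde{C})\|_{2}\leq\min\left\{ \frac{\|R(\tilde{C})\|_{F}}{\sqrt{\lambda_{\min}((A+\alpha ZZ^{T})^{\beta})}},\left(n^{1/2}\|R(\tilde{C})\|_{F}\right)^{1/2}\right\}. \]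
   Context: For a symmetric positive definite matrix $M$, $M^{1/2}$ is its principal square root and $M^{-1/2}=(M^{1/2})^{-1}$; $M^{\beta/2},M^{\beta}$ are interpreted accordingly. $\|\cdot\|_F$ is the Frobenius norm, $\|\cdot\|_2$ the spectral norm, $\lambda_{\min}$ the smallest eigenvalue. *)

theory Defs
  imports "HOL-Analysis.Analysis"
begin

text \<open>Matrices are real^'c^'r (rows indexed by 'r, columns by 'c); n = CARD('n).\<close>

definition sym_mat :: "real^'n^'n \<Rightarrow> bool" where
  "sym_mat M \<longleftrightarrow> transpose M = M"

definition pos_def :: "real^'n^'n \<Rightarrow> bool" where
  "pos_def M \<longleftrightarrow> sym_mat M \<and> (\<forall>x. x \<noteq> 0 \<longrightarrow> x \<bullet> (M *v x) > 0)"

definition pos_semidef :: "real^'n^'n \<Rightarrow> bool" where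
  "pos_semidef M \<longleftrightarrow> sym_mat M \<and> (\<forall>x. x \<bullet> (M *v x) \<ge> 0)"

definition msqrt :: "real^'n^'n \<Rightarrow> real^'n^'n" where
  "msqrt M = (THE S. pos_semidef S \<and> S ** S = M)"

text \<open>M^(beta/2) and M^beta for beta in {1,-1}.\<close>
definition mpow_half :: "real \<Rightarrow> real^'n^'n \<Rightarrow> real^'n^'n" where
  "mpow_half \<beta> M = (if \<beta> = 1 then msqrt M else matrix_inv (msqrt M))"

definition mpow :: "real \<Rightarrow> real^'n^'n \<Rightarrow> real^'n^'n" where
  "mpow \<beta> M = (if \<beta> = 1 then M else matrix_inv M)"

definition frob_norm :: "real^'c^'r \<Rightarrow> real" where
  "frob_norm M = sqrt (\<Sum>i\<in>UNIV. \<Sum>j\<in>UNIV. (M $ i $ j)^2)"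

definition spec_norm :: "real^'c^'r \<Rightarrow> real" where
  "spec_norm M = onorm (\<lambda>x. M *v x)"

definition lambda_min :: "real^'n^'n \<Rightarrow> real" where
  "lambda_min M = Min {l. \<exists>v. v \<noteq> 0 \<and> M *v v = l *\<^sub>R v}"

end

theory Submission
  imports Defs
begin

(* Put P = A + alpha Z Z^T, X = P^(beta/2) and Y = A^(beta/2) + alpha beta C. Both X and Y are
   positive semidefinite, and since P^beta = A^beta + alpha beta V V^T (for beta = -1 this is the
   Sherman-Morrison-Woodbury formula), X^2 - Y^2 = alpha beta R(C).

   The bounds are then perturbation bounds for square roots. If b is a unit eigenvector of X - Y
   with eigenvalue mu, then b^T (X^2 - Y^2) b = mu (b^T X b + b^T Y b) and
   |mu| = |b^T X b - b^T Y b| <= b^T X b + b^T Y b, so mu^2 <= |b^T (X^2 - Y^2) b|. Summing over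
   an orthonormal eigenbasis of X - Y gives ||X - Y||_F^2 <= sqrt n ||X^2 - Y^2||_F; bounding
   b^T X b from below by lambda_min(X^2)^(1/2) instead bounds every |mu|, hence ||X - Y||_2. The
   case X^2 = Y^2 of the Frobenius bound is the uniqueness of the principal square root. *)

section \<open>Symmetric and positive semidefinite matrices\<close>

lemma inner_matrix_vector_transpose: "x \<bullet> (M *v y) = (transpose M *v x) \<bullet> (y::real^'c)"
  for M :: "real^'c^'r"
  by (simp add: dot_lmul_matrix[symmetric])

lemma sym_mat_inner_commute: "sym_mat M \<Longrightarrow> x \<bullet> (M *v y) = (M *v x) \<bullet> (y::real^'n)"
  by (metis inner_matrix_vector_transpose sym_mat_def)

lemma sym_mat_eigenvector_inner:
  "sym_mat M \<Longrightarrow> M *v b = \<mu> *\<^sub>R b \<Longrightarrow> (M *v x) \<bullet> b = \<mu> * (x \<bullet> (b::real^'n))"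
  by (metis sym_mat_inner_commute inner_scaleR_right)

lemma sym_mat_diff: "sym_mat X \<Longrightarrow> sym_mat Y \<Longrightarrow> sym_mat (X - Y)"
  unfolding sym_mat_def by (simp add: vec_eq_iff transpose_def)

lemma sym_mat_square: "sym_mat X \<Longrightarrow> sym_mat (X ** X)"
  unfolding sym_mat_def by (simp add: matrix_transpose_mul)

lemma pos_semidef_sym: "pos_semidef M \<Longrightarrow> sym_mat M"
  unfolding pos_semidef_def by blast

lemma pos_semidef_nonneg: "pos_semidef M \<Longrightarrow> x \<bullet> (M *v x) \<ge> 0"
  unfolding pos_semidef_def by blast

section \<open>Orthonormal bases\<close>

definition orthonormal_basis :: "(real^'n) set \<Rightarrow> bool" where
  "orthonormal_basis B \<longleftrightarrow>
     finite B \<and> card B = CARD('n) \<and> pairwise orthogonal B \<and> (\<forall>b\<in>B. norm b = 1)"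

lemma orthonormal_basis_expansion:
  fixes B :: "(real^'n) set"
  assumes "orthonormal_basis B"
  shows "(\<Sum>b\<in>B. (x \<bullet> b) *\<^sub>R b) = x"
proof -
  from assms have "finite B" "card B = CARD('n)" and orth: "pairwise orthogonal B"
    and unit: "\<And>b. b \<in> B \<Longrightarrow> norm b = 1"
    unfolding orthonormal_basis_def by auto
  have "0 \<notin> B" using unit by force
  hence "independent B" using orth pairwise_orthogonal_independent by blast
  hence "x \<in> span B"
    using eucl.card_eq_dim[of B UNIV] \<open>finite B\<close> \<open>card B = CARD('n)\<close> by (auto simp: dim_UNIV)
  thus ?thesis using orthonormal_basis_expand[OF orth unit _ \<open>finite B\<close>] by blast
qed

lemma orthonormal_basis_inner:
  "orthonormal_basis B \<Longrightarrow> x \<bullet> y = (\<Sum>b\<in>B. (x \<bullet> b) * (y \<bullet> b))"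
proof -
  assume "orthonormal_basis B"
  hence "x \<bullet> y = x \<bullet> (\<Sum>b\<in>B. (y \<bullet> b) *\<^sub>R b)" by (simp add: orthonormal_basis_expansion)
  thus ?thesis by (simp add: inner_sum_right mult.commute)
qed

lemma orthonormal_basis_norm_squared:
  "orthonormal_basis B \<Longrightarrow> (norm x)\<^sup>2 = (\<Sum>b\<in>B. (x \<bullet> b)\<^sup>2)"
  unfolding power2_norm_eq_inner by (simp add: orthonormal_basis_inner[of B x x] power2_eq_square)

lemma orthonormal_basis_eqI:
  assumes "orthonormal_basis B" and "\<And>b. b \<in> B \<Longrightarrow> u \<bullet> b = v \<bullet> b"
  shows "u = v"
proof -
  have "u = (\<Sum>b\<in>B. (u \<bullet> b) *\<^sub>R b)" using assms(1) by (simp add: orthonormal_basis_expansion)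
  also have "\<dots> = (\<Sum>b\<in>B. (v \<bullet> b) *\<^sub>R b)" using assms(2) by simp
  also have "\<dots> = v" using assms(1) by (simp add: orthonormal_basis_expansion)
  finally show ?thesis .
qed

section \<open>The spectral theorem\<close>

lemma nonpos_if_linear_le_quadratic:
  fixes g c :: real
  assumes "\<And>t. 2 * t * g \<le> t\<^sup>2 * c"
  shows "g \<le> 0"
proof (rule ccontr)
  assume "\<not> g \<le> 0"
  define t where "t = g / (\<bar>c\<bar> + 1)"
  have t: "t > 0" "t * (\<bar>c\<bar> + 1) = g" using \<open>\<not> g \<le> 0\<close> by (simp_all add: t_def)
  have "2 * t * g \<le> t * (t * \<bar>c\<bar>)"
    using assms[of t] abs_ge_self[of c] t(1)
    by (smt (verit) mult_left_mono power2_eq_square mult.assoc zero_le_power2)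
  hence "2 * g \<le> t * \<bar>c\<bar>" using t(1) by simp
  thus False using t \<open>\<not> g \<le> 0\<close> by (simp add: algebra_simps)
qed

lemma rayleigh_maximizer_eigenvector:
  fixes M :: "real^'n^'n" and x :: "real^'n"
  defines "l \<equiv> x \<bullet> (M *v x)"
  assumes sym: "sym_mat M" and W: "subspace W" and "x \<in> W" and "norm x = 1"
    and invariant: "M *v x \<in> W"
    and max: "\<And>y. y \<in> W \<Longrightarrow> y \<bullet> (M *v y) \<le> l * (y \<bullet> y)"
  shows "M *v x = l *\<^sub>R x"
proof -
  define y where "y = M *v x - l *\<^sub>R x"
  define c where "c = l * (y \<bullet> y) - y \<bullet> (M *v y)"
  have "y \<in> W" unfolding y_def using W \<open>x \<in> W\<close> invariant by (intro subspace_diff subspace_mul)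
  have "x \<bullet> (M *v y) = y \<bullet> (M *v x)"
    using sym_mat_inner_commute[OF sym, of x y] by (simp add: inner_commute)
  hence quad: "(x + t *\<^sub>R y) \<bullet> (M *v (x + t *\<^sub>R y))
      = l + 2 * t * (y \<bullet> (M *v x)) + t\<^sup>2 * (y \<bullet> (M *v y))" for t
    by (simp add: l_def matrix_vector_right_distrib matrix_vector_mult_scaleR inner_add_left
        inner_add_right power2_eq_square algebra_simps)
  have norm2: "(x + t *\<^sub>R y) \<bullet> (x + t *\<^sub>R y) = 1 + 2 * t * (x \<bullet> y) + t\<^sup>2 * (y \<bullet> y)" for t
    using \<open>norm x = 1\<close> by (simp add: inner_add_left inner_add_right inner_commute[of y x]
        power2_eq_square algebra_simps norm_eq_1)
  have yMx: "y \<bullet> (M *v x) = y \<bullet> y + l * (x \<bullet> y)"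
    by (simp add: y_def inner_diff_left inner_commute algebra_simps)
  have mem: "x + t *\<^sub>R y \<in> W" for t using W \<open>x \<in> W\<close> \<open>y \<in> W\<close> by (intro subspace_add subspace_mul)
  \<comment> \<open>t \<mapsto> (x + t y) \<bullet> M (x + t y) - l |x + t y|^2 is \<le> 0 and vanishes at t = 0,
    so its slope 2 |y|^2 there is 0\<close>
  have "2 * t * (y \<bullet> y) \<le> t\<^sup>2 * c" for t
    using max[OF mem[of t]] unfolding quad norm2 yMx c_def by (simp add: algebra_simps)
  hence "y \<bullet> y \<le> 0" by (rule nonpos_if_linear_le_quadratic)
  hence "y = 0" by (metis inner_eq_zero_iff inner_ge_zero order_antisym)
  thus ?thesis by (simp add: y_def)
qed

lemma symmetric_eigenvector_orthogonal_to:
  fixes M :: "real^'n^'n"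
  assumes sym: "sym_mat M" and "finite B" and "card B < CARD('n)"
    and eig: "\<And>b. b \<in> B \<Longrightarrow> M *v b = (b \<bullet> (M *v b)) *\<^sub>R b"
  obtains x where "norm x = 1" "\<And>b. b \<in> B \<Longrightarrow> orthogonal b x"
    "M *v x = (x \<bullet> (M *v x)) *\<^sub>R x"
proof -
  define W where "W = {y. \<forall>b\<in>B. orthogonal b y}"
  define f where "f y = y \<bullet> (M *v y)" for y
  have W: "subspace W" unfolding W_def by (rule subspace_orthogonal_to_vectors)
  have invariant: "M *v y \<in> W" if "y \<in> W" for y
  proof -
    have "b \<bullet> (M *v y) = (b \<bullet> (M *v b)) * (b \<bullet> y)" if "b \<in> B" for b
      using sym_mat_inner_commute[OF sym, of b y] eig[OF that] by (metis inner_scaleR_left)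
    thus ?thesis using \<open>y \<in> W\<close> by (simp add: W_def orthogonal_def)
  qed
  define S where "S = W \<inter> sphere 0 1"
  have "compact S" unfolding S_def using closed_subspace[OF W] by (simp add: closed_Int_compact)
  have "dim B < DIM(real^'n)" using dim_le_card'[OF \<open>finite B\<close>] \<open>card B < CARD('n)\<close> by simp
  then obtain z :: "real^'n" where "z \<noteq> 0" "\<And>y. y \<in> span B \<Longrightarrow> orthogonal z y"
    using orthogonal_to_subspace_exists by blast
  hence "z /\<^sub>R norm z \<in> S"
    by (auto simp: S_def W_def orthogonal_def span_base inner_commute)
  hence "S \<noteq> {}" by auto
  moreover have "continuous_on S f" unfolding f_def
    by (intro continuous_intros linear_continuous_on matrix_vector_mul_linear bounded_linear_inner_left)
  ultimately obtain x where "x \<in> S" and x_max: "\<And>y. y \<in> S \<Longrightarrow> f y \<le> f x"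
    using continuous_attains_sup[OF \<open>compact S\<close>] by blast
  hence "x \<in> W" "norm x = 1" by (auto simp: S_def)
  have "f y \<le> f x * (y \<bullet> y)" if "y \<in> W" for y
  proof (cases "y = 0")
    case False
    have "y /\<^sub>R norm y \<in> S" using \<open>y \<in> W\<close> False W by (simp add: S_def subspace_mul)
    moreover have "f (y /\<^sub>R norm y) = f y / (norm y)\<^sup>2"
      by (simp add: f_def matrix_vector_mult_scaleR power2_eq_square field_simps)
    ultimately have "f y / (norm y)\<^sup>2 \<le> f x" using x_max by metis
    thus ?thesis using False by (simp add: divide_le_eq power2_norm_eq_inner mult.commute)
  qed (simp add: f_def)
  hence "M *v x = (x \<bullet> (M *v x)) *\<^sub>R x"
    using rayleigh_maximizer_eigenvector[OF sym W \<open>x \<in> W\<close> \<open>norm x = 1\<close> invariant[OF \<open>x \<in> W\<close>]]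
    by (simp add: f_def)
  moreover have "\<And>b. b \<in> B \<Longrightarrow> orthogonal b x" using \<open>x \<in> W\<close> by (simp add: W_def)
  ultimately show ?thesis using that \<open>norm x = 1\<close> by blast
qed

lemma symmetric_orthonormal_eigenvectors:
  fixes M :: "real^'n^'n"
  assumes sym: "sym_mat M"
  shows "k \<le> CARD('n) \<Longrightarrow> \<exists>B. finite B \<and> card B = k \<and> pairwise orthogonal B \<and> (\<forall>b\<in>B. norm b = 1)
           \<and> (\<forall>b\<in>B. M *v b = (b \<bullet> (M *v b)) *\<^sub>R b)"
proof (induction k)
  case 0
  show ?case by (intro exI[of _ "{}"]) auto
next
  case (Suc k)
  then obtain B where B: "finite B" "card B = k" "pairwise orthogonal B" "\<forall>b\<in>B. norm b = 1"
    "\<forall>b\<in>B. M *v b = (b \<bullet> (M *v b)) *\<^sub>R b"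
    by auto
  obtain x where x: "norm x = 1" "\<And>b. b \<in> B \<Longrightarrow> orthogonal b x" "M *v x = (x \<bullet> (M *v x)) *\<^sub>R x"
    using symmetric_eigenvector_orthogonal_to[OF sym \<open>finite B\<close>] B Suc.prems by auto
  have "x \<notin> B" using x(1,2) by (metis norm_eq_1 orthogonal_def zero_neq_one)
  moreover have "pairwise orthogonal (insert x B)"
    using B(3) x(2) by (auto simp: pairwise_insert orthogonal_commute)
  ultimately show ?case using B x by (intro exI[of _ "insert x B"]) simp
qed

lemma symmetric_orthonormal_eigenbasis:
  fixes M :: "real^'n^'n"
  assumes "sym_mat M"
  obtains B where "orthonormal_basis B" "\<And>b. b \<in> B \<Longrightarrow> M *v b = (b \<bullet> (M *v b)) *\<^sub>R b"
  using symmetric_orthonormal_eigenvectors[OF assms order_refl] that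
  unfolding orthonormal_basis_def by blast

lemma lambda_min_eigenbasis:
  fixes M :: "real^'n^'n"
  assumes "sym_mat M" and B: "orthonormal_basis B" and eig: "\<And>b. b \<in> B \<Longrightarrow> M *v b = \<nu> b *\<^sub>R b"
  shows "lambda_min M = Min (\<nu> ` B)"
proof -
  have "{l. \<exists>v. v \<noteq> 0 \<and> M *v v = l *\<^sub>R v} = \<nu> ` B"
  proof (intro equalityI subsetI)
    fix l assume "l \<in> {l. \<exists>v. v \<noteq> 0 \<and> M *v v = l *\<^sub>R v}"
    then obtain v where "v \<noteq> 0" and v: "M *v v = l *\<^sub>R v" by blast
    then obtain b where "b \<in> B" "v \<bullet> b \<noteq> 0" using orthonormal_basis_eqI[OF B, of v 0] by auto
    moreover have "l * (v \<bullet> b) = \<nu> b * (v \<bullet> b)"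
      using sym_mat_eigenvector_inner[OF \<open>sym_mat M\<close> eig[OF \<open>b \<in> B\<close>], of v] v by simp
    ultimately show "l \<in> \<nu> ` B" by auto
  next
    fix l assume "l \<in> \<nu> ` B"
    then obtain b where "b \<in> B" "l = \<nu> b" by blast
    moreover have "b \<noteq> 0" using B \<open>b \<in> B\<close> by (force simp: orthonormal_basis_def)
    ultimately show "l \<in> {l. \<exists>v. v \<noteq> 0 \<and> M *v v = l *\<^sub>R v}" using eig by blast
  qed
  thus ?thesis by (simp add: lambda_min_def)
qed

lemma norm_matrix_vector_le_eigenvalue_bound:
  fixes M :: "real^'n^'n"
  assumes "sym_mat M" and B: "orthonormal_basis B"
    and eig: "\<And>b. b \<in> B \<Longrightarrow> M *v b = \<mu> b *\<^sub>R b" and bound: "\<And>b. b \<in> B \<Longrightarrow> \<bar>\<mu> b\<bar> \<le> K"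
  shows "norm (M *v x) \<le> K * norm x"
proof (rule power2_le_imp_le)
  have "(norm (M *v x))\<^sup>2 = (\<Sum>b\<in>B. (\<mu> b)\<^sup>2 * (x \<bullet> b)\<^sup>2)"
    unfolding orthonormal_basis_norm_squared[OF B]
    by (intro sum.cong refl) (simp add: sym_mat_eigenvector_inner[OF \<open>sym_mat M\<close> eig] power_mult_distrib)
  also have "\<dots> \<le> (\<Sum>b\<in>B. K\<^sup>2 * (x \<bullet> b)\<^sup>2)"
    using bound by (intro sum_mono mult_right_mono zero_le_power2) (metis abs_ge_zero power2_abs power_mono)
  also have "\<dots> = (K * norm x)\<^sup>2"
    by (simp add: orthonormal_basis_norm_squared[OF B] power_mult_distrib sum_distrib_left)
  finally show "(norm (M *v x))\<^sup>2 \<le> (K * norm x)\<^sup>2" .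
  obtain b where "b \<in> B" using B by (fastforce simp: orthonormal_basis_def)
  hence "K \<ge> 0" using bound[of b] by linarith
  thus "0 \<le> K * norm x" by simp
qed

section \<open>Frobenius and spectral norms\<close>

lemma frob_norm_nonneg: "frob_norm M \<ge> 0"
  unfolding frob_norm_def by (simp add: sum_nonneg)

lemma frob_norm_squared_rows: "(frob_norm (M::real^'c^'r))\<^sup>2 = (\<Sum>i\<in>UNIV. (norm (M$i))\<^sup>2)"
proof -
  have "(frob_norm M)\<^sup>2 = (\<Sum>i\<in>UNIV. \<Sum>j\<in>UNIV. (M $ i $ j)\<^sup>2)"
    unfolding frob_norm_def by (intro real_sqrt_pow2 sum_nonneg zero_le_power2)
  thus ?thesis unfolding power2_norm_eq_inner by (simp add: inner_vec_def power2_eq_square)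
qed

lemma frob_norm_eq_0_iff: "frob_norm M = 0 \<longleftrightarrow> M = 0"
  unfolding frob_norm_def by (simp add: sum_nonneg sum_nonneg_eq_0_iff vec_eq_iff)

lemma frob_norm_scaleR: "frob_norm (c *\<^sub>R M) = \<bar>c\<bar> * frob_norm M"
  unfolding frob_norm_def
  by (simp add: power_mult_distrib sum_distrib_left[symmetric] real_sqrt_mult)

lemma norm_matrix_vector_squared: "(norm ((M::real^'c^'r) *v x))\<^sup>2 = (\<Sum>i\<in>UNIV. (M$i \<bullet> x)\<^sup>2)"
  unfolding power2_norm_eq_inner
  by (simp add: inner_vec_def matrix_vector_mul_component power2_eq_square)

lemma norm_matrix_vector_le_frob_norm: "norm ((M::real^'c^'r) *v x) \<le> frob_norm M * norm x"
proof (rule power2_le_imp_le)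
  have "(norm (M *v x))\<^sup>2 \<le> (\<Sum>i\<in>UNIV. (norm (M$i))\<^sup>2 * (norm x)\<^sup>2)"
    unfolding norm_matrix_vector_squared
  proof (rule sum_mono)
    fix i
    have "\<bar>M$i \<bullet> x\<bar> \<le> norm (M$i) * norm x" by (rule Cauchy_Schwarz_ineq2)
    thus "(M$i \<bullet> x)\<^sup>2 \<le> (norm (M$i))\<^sup>2 * (norm x)\<^sup>2"
      by (metis abs_ge_zero power2_abs power_mono power_mult_distrib)
  qed
  thus "(norm (M *v x))\<^sup>2 \<le> (frob_norm M * norm x)\<^sup>2"
    by (simp add: frob_norm_squared_rows power_mult_distrib sum_distrib_right)
  show "0 \<le> frob_norm M * norm x" using frob_norm_nonneg[of M] by simp
qed

lemma spec_norm_le_frob_norm: "spec_norm M \<le> frob_norm M"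
  unfolding spec_norm_def by (rule onorm_le) (rule norm_matrix_vector_le_frob_norm)

lemma frob_norm_orthonormal_basis:
  assumes "orthonormal_basis B"
  shows "(frob_norm (M::real^'n^'r))\<^sup>2 = (\<Sum>b\<in>B. (norm (M *v b))\<^sup>2)"
proof -
  have "(\<Sum>b\<in>B. (norm (M *v b))\<^sup>2) = (\<Sum>i\<in>UNIV. \<Sum>b\<in>B. (M$i \<bullet> b)\<^sup>2)"
    unfolding norm_matrix_vector_squared by (rule sum.swap)
  also have "\<dots> = (frob_norm M)\<^sup>2"
    using orthonormal_basis_norm_squared[OF assms] by (simp add: frob_norm_squared_rows)
  finally show ?thesis by simp
qed

lemma sum_norm_matrix_vector_le_frob_norm:
  fixes B :: "(real^'n) set"
  assumes "orthonormal_basis B"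
  shows "(\<Sum>b\<in>B. norm (M *v b)) \<le> sqrt (real CARD('n)) * frob_norm M"
proof (rule power2_le_imp_le)
  have "(\<Sum>b\<in>B. norm (M *v b))\<^sup>2 \<le> (\<Sum>b\<in>B. (norm (M *v b))\<^sup>2) * real (card B)"
    by (rule sum_squared_le_sum_of_squares)
  also have "\<dots> = (sqrt (real CARD('n)) * frob_norm M)\<^sup>2"
    using assms frob_norm_orthonormal_basis[OF assms, of M]
    by (simp add: orthonormal_basis_def power_mult_distrib)
  finally show "(\<Sum>b\<in>B. norm (M *v b))\<^sup>2 \<le> (sqrt (real CARD('n)) * frob_norm M)\<^sup>2" .
  show "0 \<le> sqrt (real CARD('n)) * frob_norm M" using frob_norm_nonneg[of M] by simp
qed

lemma abs_quadratic_form_le_frob_norm: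
  "norm b = 1 \<Longrightarrow> \<bar>b \<bullet> (M *v b)\<bar> \<le> frob_norm (M::real^'n^'n)"
  by (metis Cauchy_Schwarz_ineq2 mult_1 norm_matrix_vector_le_frob_norm order_trans mult.commute)

section \<open>Perturbation bounds for square roots\<close>

lemma eigenvalue_diff_pos_semidef:
  fixes X Y :: "real^'n^'n"
  assumes X: "pos_semidef X" and Y: "pos_semidef Y"
    and eig: "(X - Y) *v b = \<mu> *\<^sub>R b" and "norm b = 1"
  shows "\<bar>\<mu>\<bar> * (b \<bullet> (X *v b) + b \<bullet> (Y *v b)) = \<bar>b \<bullet> ((X ** X - Y ** Y) *v b)\<bar>"
    and "\<mu>\<^sup>2 \<le> \<bar>b \<bullet> ((X ** X - Y ** Y) *v b)\<bar>"
proof -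
  define p q where "p = b \<bullet> (X *v b)" and "q = b \<bullet> (Y *v b)"
  have "p \<ge> 0" "q \<ge> 0" unfolding p_def q_def using X Y by (simp_all add: pos_semidef_nonneg)
  have Xb: "X *v b = Y *v b + \<mu> *\<^sub>R b"
    using eig by (simp add: matrix_vector_mult_diff_rdistrib algebra_simps)
  have "b \<bullet> b = 1" using \<open>norm b = 1\<close> by (simp add: norm_eq_1)
  hence \<mu>: "\<mu> = p - q" unfolding p_def q_def Xb by (simp add: inner_add_right)
  have "b \<bullet> ((X ** X - Y ** Y) *v b) = (X *v b) \<bullet> (X *v b) - (Y *v b) \<bullet> (Y *v b)"
    using sym_mat_inner_commute[OF pos_semidef_sym[OF X]] sym_mat_inner_commute[OF pos_semidef_sym[OF Y]]
    by (simp add: matrix_vector_mult_diff_rdistrib matrix_vector_mul_assoc[symmetric] inner_diff_right)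
  also have "\<dots> = 2 * \<mu> * q + \<mu>\<^sup>2"
    unfolding Xb q_def using \<open>b \<bullet> b = 1\<close>
    by (simp add: inner_add_left inner_add_right inner_commute power2_eq_square algebra_simps)
  also have "\<dots> = \<mu> * (p + q)" unfolding \<mu> by (simp add: power2_eq_square algebra_simps)
  finally have "b \<bullet> ((X ** X - Y ** Y) *v b) = \<mu> * (p + q)" .
  thus abs_eq: "\<bar>\<mu>\<bar> * (p + q) = \<bar>b \<bullet> ((X ** X - Y ** Y) *v b)\<bar>"
    using \<open>p \<ge> 0\<close> \<open>q \<ge> 0\<close> by (simp add: abs_mult)
  have "\<mu>\<^sup>2 = \<bar>\<mu>\<bar> * \<bar>p - q\<bar>" unfolding \<mu> by (simp add: power2_eq_square abs_mult[symmetric])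
  also have "\<dots> \<le> \<bar>\<mu>\<bar> * (p + q)" using \<open>p \<ge> 0\<close> \<open>q \<ge> 0\<close> by (intro mult_left_mono) auto
  finally show "\<mu>\<^sup>2 \<le> \<bar>b \<bullet> ((X ** X - Y ** Y) *v b)\<bar>" unfolding abs_eq .
qed

lemma frob_norm_diff_le_square_diff:
  fixes X Y :: "real^'n^'n"
  assumes X: "pos_semidef X" and Y: "pos_semidef Y"
  shows "frob_norm (X - Y) \<le> sqrt (sqrt (real CARD('n)) * frob_norm (X ** X - Y ** Y))"
proof (rule real_le_rsqrt)
  define D where "D = X ** X - Y ** Y"
  have "sym_mat (X - Y)" using X Y by (simp add: sym_mat_diff pos_semidef_sym)
  then obtain B where B: "orthonormal_basis B"
    and eig: "\<And>b. b \<in> B \<Longrightarrow> (X - Y) *v b = (b \<bullet> ((X - Y) *v b)) *\<^sub>R b"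
    using symmetric_orthonormal_eigenbasis by blast
  define \<mu> where "\<mu> b = b \<bullet> ((X - Y) *v b)" for b
  have eig: "b \<in> B \<Longrightarrow> (X - Y) *v b = \<mu> b *\<^sub>R b" for b using eig by (simp add: \<mu>_def)
  have unit: "b \<in> B \<Longrightarrow> norm b = 1" for b using B by (simp add: orthonormal_basis_def)
  have "(frob_norm (X - Y))\<^sup>2 = (\<Sum>b\<in>B. (\<mu> b)\<^sup>2)"
    unfolding frob_norm_orthonormal_basis[OF B] by (intro sum.cong refl) (simp add: eig unit)
  also have "\<dots> \<le> (\<Sum>b\<in>B. norm (D *v b))"
  proof (rule sum_mono)
    fix b assume "b \<in> B"
    have "(\<mu> b)\<^sup>2 \<le> \<bar>b \<bullet> (D *v b)\<bar>"
      unfolding D_def by (rule eigenvalue_diff_pos_semidef(2)[OF X Y eig[OF \<open>b \<in> B\<close>] unit[OF \<open>b \<in> B\<close>]])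
    also have "\<dots> \<le> norm (D *v b)" using Cauchy_Schwarz_ineq2[of b "D *v b"] unit[OF \<open>b \<in> B\<close>] by simp
    finally show "(\<mu> b)\<^sup>2 \<le> norm (D *v b)" .
  qed
  also have "\<dots> \<le> sqrt (real CARD('n)) * frob_norm D" by (rule sum_norm_matrix_vector_le_frob_norm[OF B])
  finally show "(frob_norm (X - Y))\<^sup>2 \<le> sqrt (real CARD('n)) * frob_norm (X ** X - Y ** Y)"
    unfolding D_def .
qed

lemma lambda_min_square:
  fixes X :: "real^'n^'n"
  assumes X: "pos_semidef X" and "invertible X"
  shows "lambda_min (X ** X) > 0" and "norm b = 1 \<Longrightarrow> sqrt (lambda_min (X ** X)) \<le> b \<bullet> (X *v b)"
proof -
  have sym: "sym_mat X" using X by (rule pos_semidef_sym)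
  then obtain C where C: "orthonormal_basis C" and eig: "\<And>c. c \<in> C \<Longrightarrow> X *v c = (c \<bullet> (X *v c)) *\<^sub>R c"
    using symmetric_orthonormal_eigenbasis by blast
  define \<nu> where "\<nu> c = c \<bullet> (X *v c)" for c
  have eig: "c \<in> C \<Longrightarrow> X *v c = \<nu> c *\<^sub>R c" for c using eig by (simp add: \<nu>_def)
  have "c \<in> C \<Longrightarrow> (X ** X) *v c = (\<nu> c)\<^sup>2 *\<^sub>R c" for c
    by (simp add: matrix_vector_mul_assoc[symmetric] eig matrix_vector_mult_scaleR power2_eq_square)
  hence L: "lambda_min (X ** X) = Min ((\<lambda>c. (\<nu> c)\<^sup>2) ` C)"
    by (rule lambda_min_eigenbasis[OF sym_mat_square[OF sym] C])
  have "finite C" "C \<noteq> {}" using C by (auto simp: orthonormal_basis_def)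
  have \<nu>_pos: "\<nu> c > 0" if "c \<in> C" for c
  proof -
    have "c \<noteq> 0" using C \<open>c \<in> C\<close> by (force simp: orthonormal_basis_def)
    hence "X *v c \<noteq> 0"
      using inj_matrix_vector_mult[OF \<open>invertible X\<close>] by (metis injD matrix_vector_mult_0_right)
    hence "\<nu> c \<noteq> 0" using eig[OF that] by auto
    moreover have "\<nu> c \<ge> 0" unfolding \<nu>_def using X by (rule pos_semidef_nonneg)
    ultimately show ?thesis by simp
  qed
  have "0 < (\<nu> c)\<^sup>2" if "c \<in> C" for c using \<nu>_pos[OF that] by simp
  hence "\<forall>a \<in> (\<lambda>c. (\<nu> c)\<^sup>2) ` C. 0 < a" by blast
  thus "lambda_min (X ** X) > 0" unfolding L using \<open>finite C\<close> \<open>C \<noteq> {}\<close> 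
    by (metis Min_gr_iff finite_imageI image_is_empty)
  have le_\<nu>: "sqrt (lambda_min (X ** X)) \<le> \<nu> c" if "c \<in> C" for c
  proof (rule real_le_lsqrt)
    show "lambda_min (X ** X) \<le> (\<nu> c)\<^sup>2" unfolding L using \<open>finite C\<close> that by (intro Min_le) auto
  qed (use \<nu>_pos[OF that] in simp)
  assume "norm b = 1"
  have "sqrt (lambda_min (X ** X)) = (\<Sum>c\<in>C. sqrt (lambda_min (X ** X)) * (b \<bullet> c)\<^sup>2)"
    using orthonormal_basis_norm_squared[OF C, of b] \<open>norm b = 1\<close> by (simp add: sum_distrib_left[symmetric])
  also have "\<dots> \<le> (\<Sum>c\<in>C. \<nu> c * (b \<bullet> c)\<^sup>2)"
    by (intro sum_mono mult_right_mono le_\<nu> zero_le_power2)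
  also have "\<dots> = (\<Sum>c\<in>C. (b \<bullet> c) * ((X *v b) \<bullet> c))"
    by (intro sum.cong refl) (simp add: sym_mat_eigenvector_inner[OF sym eig] power2_eq_square)
  also have "\<dots> = b \<bullet> (X *v b)" by (rule orthonormal_basis_inner[OF C, symmetric])
  finally show "sqrt (lambda_min (X ** X)) \<le> b \<bullet> (X *v b)" .
qed

lemma spec_norm_diff_le_square_diff:
  fixes X Y :: "real^'n^'n"
  assumes X: "pos_semidef X" and Y: "pos_semidef Y" and "invertible X"
  shows "spec_norm (X - Y) \<le> frob_norm (X ** X - Y ** Y) / sqrt (lambda_min (X ** X))"
proof -
  define D where "D = X ** X - Y ** Y"
  define L where "L = lambda_min (X ** X)"
  have "L > 0" unfolding L_def using lambda_min_square(1)[OF X \<open>invertible X\<close>] .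
  have sym: "sym_mat (X - Y)" using X Y by (simp add: sym_mat_diff pos_semidef_sym)
  then obtain B where B: "orthonormal_basis B"
    and eig: "\<And>b. b \<in> B \<Longrightarrow> (X - Y) *v b = (b \<bullet> ((X - Y) *v b)) *\<^sub>R b"
    using symmetric_orthonormal_eigenbasis by blast
  define \<mu> where "\<mu> b = b \<bullet> ((X - Y) *v b)" for b
  have eig: "b \<in> B \<Longrightarrow> (X - Y) *v b = \<mu> b *\<^sub>R b" for b using eig by (simp add: \<mu>_def)
  have bound: "\<bar>\<mu> b\<bar> \<le> frob_norm D / sqrt L" if "b \<in> B" for b
  proof -
    have "norm b = 1" using B that by (simp add: orthonormal_basis_def)
    have "\<bar>\<mu> b\<bar> * sqrt L \<le> \<bar>\<mu> b\<bar> * (b \<bullet> (X *v b) + b \<bullet> (Y *v b))"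
      using lambda_min_square(2)[OF X \<open>invertible X\<close> \<open>norm b = 1\<close>] pos_semidef_nonneg[OF Y, of b]
      unfolding L_def by (intro mult_left_mono) auto
    also have "\<dots> = \<bar>b \<bullet> (D *v b)\<bar>"
      unfolding D_def by (rule eigenvalue_diff_pos_semidef(1)[OF X Y eig[OF that] \<open>norm b = 1\<close>])
    also have "\<dots> \<le> frob_norm D" by (rule abs_quadratic_form_le_frob_norm[OF \<open>norm b = 1\<close>])
    finally show ?thesis using \<open>L > 0\<close> by (simp add: pos_le_divide_eq)
  qed
  have "norm ((X - Y) *v x) \<le> frob_norm D / sqrt L * norm x" for x
    using sym B eig bound by (rule norm_matrix_vector_le_eigenvalue_bound)
  thus ?thesis unfolding spec_norm_def D_def L_def by (rule onorm_le)
qed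

section \<open>The principal square root\<close>

definition spectral_matrix :: "(real^'n) set \<Rightarrow> (real^'n \<Rightarrow> real) \<Rightarrow> real^'n^'n" where
  "spectral_matrix B f = (\<chi> i j. \<Sum>b\<in>B. f b * b$i * b$j)"

lemma spectral_matrix_mult_vector:
  "spectral_matrix B f *v x = (\<Sum>b\<in>B. (f b * (b \<bullet> x)) *\<^sub>R b)"
proof -
  have "(spectral_matrix B f *v x)$k = (\<Sum>b\<in>B. (f b * (b \<bullet> x)) *\<^sub>R b)$k" for k
  proof -
    have "(spectral_matrix B f *v x)$k = (\<Sum>j\<in>UNIV. \<Sum>b\<in>B. f b * b$k * b$j * x$j)"
      by (simp add: matrix_vector_mult_def spectral_matrix_def sum_distrib_right)
    also have "\<dots> = (\<Sum>b\<in>B. \<Sum>j\<in>UNIV. f b * b$k * b$j * x$j)" by (rule sum.swap)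
    also have "\<dots> = (\<Sum>b\<in>B. (f b * (b \<bullet> x)) *\<^sub>R b)$k"
      by (simp add: inner_vec_def sum_distrib_left sum_component mult_ac)
    finally show ?thesis .
  qed
  thus ?thesis by (simp add: vec_eq_iff)
qed

lemma sym_mat_spectral_matrix: "sym_mat (spectral_matrix B f)"
  unfolding sym_mat_def by (simp add: vec_eq_iff transpose_def spectral_matrix_def mult_ac)

lemma spectral_matrix_eigenvector:
  assumes B: "orthonormal_basis B" and "c \<in> B"
  shows "spectral_matrix B f *v c = f c *\<^sub>R c"
proof -
  have "(f b * (b \<bullet> c)) *\<^sub>R b = (if b = c then f c *\<^sub>R c else 0)" if "b \<in> B" for b
    using B that \<open>c \<in> B\<close> by (auto simp: orthonormal_basis_def pairwise_def orthogonal_def norm_eq_1)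
  hence "spectral_matrix B f *v c = (\<Sum>b\<in>B. if b = c then f c *\<^sub>R c else 0)"
    unfolding spectral_matrix_mult_vector by (rule sum.cong[OF refl])
  also have "\<dots> = f c *\<^sub>R c" using B \<open>c \<in> B\<close> by (simp add: orthonormal_basis_def)
  finally show ?thesis .
qed

lemma pos_semidef_spectral_matrix:
  assumes "\<And>b. b \<in> B \<Longrightarrow> f b \<ge> 0"
  shows "pos_semidef (spectral_matrix B f)"
proof -
  have "x \<bullet> (spectral_matrix B f *v x) = (\<Sum>b\<in>B. f b * (x \<bullet> b)\<^sup>2)" for x
    by (simp add: spectral_matrix_mult_vector inner_sum_right inner_commute power2_eq_square mult_ac)
  thus ?thesis unfolding pos_semidef_def
    using assms by (simp add: sym_mat_spectral_matrix sum_nonneg)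
qed

lemma pos_semidef_square_root_exists:
  fixes M :: "real^'n^'n"
  assumes "pos_semidef M"
  shows "\<exists>S. pos_semidef S \<and> S ** S = M"
proof -
  obtain B where B: "orthonormal_basis B" and eig: "\<And>b. b \<in> B \<Longrightarrow> M *v b = (b \<bullet> (M *v b)) *\<^sub>R b"
    using symmetric_orthonormal_eigenbasis pos_semidef_sym[OF assms] by blast
  define ev where "ev b = b \<bullet> (M *v b)" for b
  have eig: "b \<in> B \<Longrightarrow> M *v b = ev b *\<^sub>R b" for b using eig by (simp add: ev_def)
  have "ev b \<ge> 0" for b unfolding ev_def using assms by (rule pos_semidef_nonneg)
  define S where "S = spectral_matrix B (\<lambda>b. sqrt (ev b))"
  have S_eig: "c \<in> B \<Longrightarrow> S *v c = sqrt (ev c) *\<^sub>R c" for c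
    unfolding S_def by (rule spectral_matrix_eigenvector[OF B])
  have "(S ** S) *v x = M *v x" for x
  proof (rule orthonormal_basis_eqI[OF B])
    fix c assume "c \<in> B"
    have "((S ** S) *v x) \<bullet> c = sqrt (ev c) * ((S *v x) \<bullet> c)"
      unfolding matrix_vector_mul_assoc[symmetric] S_def
      by (rule sym_mat_eigenvector_inner[OF sym_mat_spectral_matrix S_eig[OF \<open>c \<in> B\<close>, unfolded S_def]])
    also have "\<dots> = ev c * (x \<bullet> c)"
      using sym_mat_eigenvector_inner[OF _ S_eig[OF \<open>c \<in> B\<close>]] \<open>ev c \<ge> 0\<close>
      by (simp add: S_def sym_mat_spectral_matrix mult.assoc[symmetric])
    also have "\<dots> = (M *v x) \<bullet> c"
      by (rule sym_mat_eigenvector_inner[OF pos_semidef_sym[OF assms] eig[OF \<open>c \<in> B\<close>], symmetric])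
    finally show "((S ** S) *v x) \<bullet> c = (M *v x) \<bullet> c" .
  qed
  hence "S ** S = M" by (simp add: matrix_eq)
  moreover have "pos_semidef S" unfolding S_def using \<open>\<And>b. ev b \<ge> 0\<close>
    by (intro pos_semidef_spectral_matrix) simp
  ultimately show ?thesis by blast
qed

lemma pos_semidef_square_root_unique:
  fixes S T :: "real^'n^'n"
  assumes "pos_semidef S" "pos_semidef T" "S ** S = T ** T"
  shows "S = T"
proof -
  have "frob_norm (S - T) \<le> 0"
    using frob_norm_diff_le_square_diff[OF assms(1,2)] assms(3) by (simp add: frob_norm_def)
  hence "frob_norm (S - T) = 0" using frob_norm_nonneg[of "S - T"] by linarith
  thus ?thesis by (simp add: frob_norm_eq_0_iff)
qed

lemma msqrt_spec:
  assumes "pos_semidef M"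
  shows "pos_semidef (msqrt M) \<and> msqrt M ** msqrt M = M"
proof -
  have "\<exists>!S. pos_semidef S \<and> S ** S = M"
    using pos_semidef_square_root_exists[OF assms] pos_semidef_square_root_unique by blast
  thus ?thesis unfolding msqrt_def by (rule theI')
qed

lemma pos_semidef_msqrt: "pos_semidef M \<Longrightarrow> pos_semidef (msqrt M)"
  using msqrt_spec by blast

lemma msqrt_square: "pos_semidef M \<Longrightarrow> msqrt M ** msqrt M = M"
  using msqrt_spec by blast

section \<open>Inverses and the powers of order \<plusminus>1/2\<close>

lemma matrix_inv_right: "invertible (A::'a::semiring_1^'n^'m) \<Longrightarrow> A ** matrix_inv A = mat 1"
  unfolding invertible_def matrix_inv_def by (rule conjunct1[OF someI_ex])

lemma matrix_inv_left: "invertible (A::'a::semiring_1^'n^'m) \<Longrightarrow> matrix_inv A ** A = mat 1"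
  unfolding invertible_def matrix_inv_def by (rule conjunct2[OF someI_ex])

lemma invertible_matrix_inv: "invertible (A::'a::semiring_1^'n^'m) \<Longrightarrow> invertible (matrix_inv A)"
  using matrix_inv_left matrix_inv_right invertible_def by blast

lemma matrix_inv_unique:
  fixes A B :: "'a::field^'n^'n"
  assumes "A ** B = mat 1"
  shows "matrix_inv A = B"
proof -
  have "invertible A" using assms invertible_right_inverse by blast
  have "matrix_inv A = (matrix_inv A ** A) ** B" using assms by (simp add: matrix_mul_assoc[symmetric])
  thus ?thesis by (simp add: matrix_inv_left[OF \<open>invertible A\<close>])
qed

lemma matrix_inv_mult:
  fixes A B :: "'a::field^'n^'n"
  assumes "invertible A" "invertible B"
  shows "matrix_inv (A ** B) = matrix_inv B ** matrix_inv A"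
proof (rule matrix_inv_unique)
  have "A ** B ** (matrix_inv B ** matrix_inv A) = A ** (B ** matrix_inv B) ** matrix_inv A"
    by (simp add: matrix_mul_assoc)
  thus "A ** B ** (matrix_inv B ** matrix_inv A) = mat 1" by (simp add: assms matrix_inv_right)
qed

lemma invertible_square_imp_invertible:
  fixes S :: "'a::field^'n^'n"
  assumes "invertible (S ** S)"
  shows "invertible S"
  using matrix_inv_right[OF assms] invertible_right_inverse by (metis matrix_mul_assoc)

lemma transpose_matrix_inv:
  fixes A :: "real^'n^'n"
  assumes "invertible A"
  shows "transpose (matrix_inv A) = matrix_inv (transpose A)"
proof (rule matrix_inv_unique[symmetric])
  show "transpose A ** transpose (matrix_inv A) = mat 1"
    by (metis assms matrix_inv_left matrix_transpose_mul transpose_mat)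
qed

lemma sym_mat_matrix_inv: "invertible A \<Longrightarrow> sym_mat A \<Longrightarrow> sym_mat (matrix_inv A)"
  unfolding sym_mat_def by (simp add: transpose_matrix_inv)

lemma pos_semidef_matrix_inv:
  assumes "invertible A" "pos_semidef A"
  shows "pos_semidef (matrix_inv A)"
  unfolding pos_semidef_def
proof (intro conjI allI)
  show "sym_mat (matrix_inv A)" using assms by (simp add: sym_mat_matrix_inv pos_semidef_sym)
  fix x
  define y where "y = matrix_inv A *v x"
  have "x = A *v y"
    by (simp add: y_def matrix_vector_mul_assoc matrix_inv_right[OF assms(1)])
  hence "x \<bullet> (matrix_inv A *v x) = y \<bullet> (A *v y)" by (simp add: y_def inner_commute)
  thus "x \<bullet> (matrix_inv A *v x) \<ge> 0" using pos_semidef_nonneg[OF assms(2)] by simp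
qed

lemma pos_def_imp_pos_semidef: "pos_def A \<Longrightarrow> pos_semidef A"
  unfolding pos_def_def pos_semidef_def by (metis inner_zero_left order_refl less_imp_le)

lemma pos_def_invertible: "pos_def (A::real^'n^'n) \<Longrightarrow> invertible A"
  unfolding pos_def_def
  by (metis inner_zero_right less_irrefl matrix_left_invertible_ker invertible_left_inverse)

lemma invertible_msqrt: "pos_def A \<Longrightarrow> invertible (msqrt A)"
  by (metis invertible_square_imp_invertible msqrt_square pos_def_imp_pos_semidef pos_def_invertible)

lemma mpow_half_square: "pos_def A \<Longrightarrow> mpow_half \<beta> A ** mpow_half \<beta> A = mpow \<beta> A"
  by (simp add: mpow_half_def mpow_def msqrt_square pos_def_imp_pos_semidef invertible_msqrt
      matrix_inv_mult[symmetric])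

lemma pos_semidef_mpow_half: "pos_def A \<Longrightarrow> pos_semidef (mpow_half \<beta> A)"
  by (simp add: mpow_half_def pos_semidef_msqrt pos_def_imp_pos_semidef invertible_msqrt
      pos_semidef_matrix_inv)

lemma invertible_mpow_half: "pos_def A \<Longrightarrow> invertible (mpow_half \<beta> A)"
  by (simp add: mpow_half_def invertible_msqrt invertible_matrix_inv)

section \<open>Rank-k updates\<close>

lemma woodbury_matrix_identity:
  fixes A :: "real^'n^'n" and Z :: "real^'k^'n" and \<alpha> :: real
  defines "K \<equiv> mat 1 + \<alpha> *\<^sub>R (transpose Z ** matrix_inv A ** Z)"
  assumes "invertible A" and "invertible K"
  shows "matrix_inv (A + \<alpha> *\<^sub>R (Z ** transpose Z))
       = matrix_inv A - \<alpha> *\<^sub>R (matrix_inv A ** Z ** matrix_inv K ** transpose Z ** matrix_inv A)"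
proof (rule matrix_inv_unique, rule matrix_eq[THEN iffD2], rule allI)
  fix x :: "real^'n"
  define u where "u = matrix_inv A *v x"
  define w where "w = matrix_inv K *v (transpose Z *v u)"
  define q where "q = transpose Z *v (matrix_inv A *v (Z *v w))"
  have "w + \<alpha> *\<^sub>R q = K *v w"
    by (simp add: K_def q_def matrix_vector_mult_add_rdistrib scaleR_matrix_vector_assoc
        matrix_vector_mul_assoc matrix_mul_assoc)
  also have "\<dots> = transpose Z *v u"
    by (simp add: w_def matrix_vector_mul_assoc matrix_inv_right[OF \<open>invertible K\<close>])
  finally have Ztu: "transpose Z *v u = w + \<alpha> *\<^sub>R q" ..
  have Au: "A *v u = x" and AAi: "A *v (matrix_inv A *v v) = v" for v
    by (simp_all add: u_def matrix_vector_mul_assoc matrix_inv_right[OF \<open>invertible A\<close>])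
  have "(matrix_inv A - \<alpha> *\<^sub>R (matrix_inv A ** Z ** matrix_inv K ** transpose Z ** matrix_inv A)) *v x
      = u - \<alpha> *\<^sub>R (matrix_inv A *v (Z *v w))"
    by (simp add: u_def w_def matrix_vector_mult_diff_rdistrib scaleR_matrix_vector_assoc[symmetric]
        matrix_vector_mul_assoc matrix_mul_assoc)
  hence "((A + \<alpha> *\<^sub>R (Z ** transpose Z)) **
       (matrix_inv A - \<alpha> *\<^sub>R (matrix_inv A ** Z ** matrix_inv K ** transpose Z ** matrix_inv A))) *v x
      = (A + \<alpha> *\<^sub>R (Z ** transpose Z)) *v (u - \<alpha> *\<^sub>R (matrix_inv A *v (Z *v w)))"
    by (simp add: matrix_vector_mul_assoc[symmetric])
  also have "\<dots> = A *v u - \<alpha> *\<^sub>R (Z *v w) + \<alpha> *\<^sub>R (Z *v (transpose Z *v u)) - (\<alpha> * \<alpha>) *\<^sub>R (Z *v q)"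
    by (simp add: q_def AAi matrix_vector_mult_add_rdistrib scaleR_matrix_vector_assoc[symmetric]
        matrix_vector_mul_assoc[symmetric] matrix_vector_mult_diff_distrib matrix_vector_mult_scaleR
        algebra_simps)
  also have "\<dots> = x"
    unfolding Au Ztu by (simp add: matrix_vector_right_distrib matrix_vector_mult_scaleR algebra_simps)
  finally show "((A + \<alpha> *\<^sub>R (Z ** transpose Z)) **
       (matrix_inv A - \<alpha> *\<^sub>R (matrix_inv A ** Z ** matrix_inv K ** transpose Z ** matrix_inv A))) *v x
      = mat 1 *v x" by simp
qed

lemma inverse_quadratic_form_less:
  fixes A :: "real^'n^'n" and Z :: "real^'k^'n"
  assumes "pos_def A" and pd: "pos_def (A - Z ** transpose Z)" and "y \<noteq> 0"
  shows "(Z *v y) \<bullet> (matrix_inv A *v (Z *v y)) < y \<bullet> y"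
proof (cases "Z *v y = 0")
  case True
  thus ?thesis using \<open>y \<noteq> 0\<close> by simp
next
  case False
  define w where "w = matrix_inv A *v (Z *v y)"
  define s where "s = (Z *v y) \<bullet> w"
  have Aw: "A *v w = Z *v y"
    by (simp add: w_def matrix_vector_mul_assoc matrix_mul_assoc matrix_inv_right
        pos_def_invertible[OF \<open>pos_def A\<close>])
  hence "w \<noteq> 0" using False by auto
  hence "0 < w \<bullet> ((A - Z ** transpose Z) *v w)" using pd by (simp add: pos_def_def)
  also have "\<dots> = w \<bullet> (A *v w) - w \<bullet> (Z *v (transpose Z *v w))"
    by (simp only: matrix_vector_mult_diff_rdistrib matrix_vector_mul_assoc inner_diff_right)
  also have "\<dots> = s - (norm (transpose Z *v w))\<^sup>2"
    using inner_matrix_vector_transpose[where x=w and M=Z and y="transpose Z *v w"]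
    by (simp add: Aw s_def inner_commute power2_norm_eq_inner)
  finally have lt: "(norm (transpose Z *v w))\<^sup>2 < s" by simp
  hence "s > 0" by (smt (verit) zero_le_power2)
  have "s = y \<bullet> (transpose Z *v w)"
    unfolding s_def inner_matrix_vector_transpose[where x=y and M="transpose Z"] by simp
  also have "\<dots> \<le> norm y * norm (transpose Z *v w)" by (rule norm_cauchy_schwarz)
  finally have "s\<^sup>2 \<le> (norm y)\<^sup>2 * (norm (transpose Z *v w))\<^sup>2"
    using \<open>s > 0\<close> by (metis power_mono power_mult_distrib less_imp_le)
  also have "\<dots> < (norm y)\<^sup>2 * s" using lt \<open>y \<noteq> 0\<close> by simp
  finally have "s < (norm y)\<^sup>2" using \<open>s > 0\<close> by (simp add: power2_eq_square)
  thus ?thesis by (simp add: s_def w_def power2_norm_eq_inner)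
qed

lemma pos_def_capacitance:
  fixes A :: "real^'n^'n" and Z :: "real^'k^'n"
  assumes "pos_def A" and "pos_def (A + \<alpha> *\<^sub>R (Z ** transpose Z))" and "\<alpha> = 1 \<or> \<alpha> = -1"
  shows "pos_def (mat 1 + \<alpha> *\<^sub>R (transpose Z ** matrix_inv A ** Z))"
proof -
  have psd: "pos_semidef (matrix_inv A)"
    using assms(1) by (simp add: pos_semidef_matrix_inv pos_def_invertible pos_def_imp_pos_semidef)
  hence "transpose (matrix_inv A) = matrix_inv A" by (simp add: pos_semidef_sym[unfolded sym_mat_def])
  hence "sym_mat (transpose Z ** matrix_inv A ** Z)"
    unfolding sym_mat_def by (simp add: matrix_transpose_mul matrix_mul_assoc)
  hence "sym_mat (mat 1 + \<alpha> *\<^sub>R (transpose Z ** matrix_inv A ** Z))"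
    unfolding sym_mat_def by (auto simp: vec_eq_iff transpose_def mat_def)
  moreover have "y \<bullet> ((mat 1 + \<alpha> *\<^sub>R (transpose Z ** matrix_inv A ** Z)) *v y) > 0" if "y \<noteq> 0" for y
  proof -
    define s where "s = (Z *v y) \<bullet> (matrix_inv A *v (Z *v y))"
    have "y \<bullet> ((mat 1 + \<alpha> *\<^sub>R (transpose Z ** matrix_inv A ** Z)) *v y)
        = y \<bullet> y + \<alpha> * (y \<bullet> (transpose Z *v (matrix_inv A *v (Z *v y))))"
      by (simp only: matrix_vector_mult_add_rdistrib scaleR_matrix_vector_assoc[symmetric]
          matrix_vector_mul_assoc[symmetric] inner_add_right inner_scaleR_right matrix_vector_mul_lid)
    also have "\<dots> = y \<bullet> y + \<alpha> * s"
      unfolding s_def inner_matrix_vector_transpose[where x=y and M="transpose Z"] by simp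
    finally have q: "y \<bullet> ((mat 1 + \<alpha> *\<^sub>R (transpose Z ** matrix_inv A ** Z)) *v y) = y \<bullet> y + \<alpha> * s" .
    have "s \<ge> 0" unfolding s_def using psd by (rule pos_semidef_nonneg)
    have "0 < y \<bullet> y + \<alpha> * s" using assms(3)
    proof
      assume "\<alpha> = 1"
      thus ?thesis using \<open>s \<ge> 0\<close> \<open>y \<noteq> 0\<close> by (simp add: add_pos_nonneg)
    next
      assume "\<alpha> = -1"
      hence "s < y \<bullet> y"
        unfolding s_def using assms(1,2) \<open>y \<noteq> 0\<close> by (intro inverse_quadratic_form_less) auto
      thus ?thesis using \<open>\<alpha> = -1\<close> by simp
    qed
    thus ?thesis unfolding q .
  qed
  ultimately show ?thesis by (simp add: pos_def_def)
qed

lemma mpow_rank_update: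
  fixes A :: "real^'n^'n" and Z V :: "real^'k^'n"
  assumes pdA: "pos_def A" and pdAZ: "pos_def (A + \<alpha> *\<^sub>R (Z ** transpose Z))"
    and "\<alpha> = 1 \<or> \<alpha> = -1" and "\<beta> = 1 \<or> \<beta> = -1"
    and V: "V = (if \<beta> = 1 then Z
        else matrix_inv A ** Z ** matrix_inv (msqrt (mat 1 + \<alpha> *\<^sub>R (transpose Z ** matrix_inv A ** Z))))"
  shows "mpow \<beta> (A + \<alpha> *\<^sub>R (Z ** transpose Z)) = mpow \<beta> A + (\<alpha> * \<beta>) *\<^sub>R (V ** transpose V)"
  using \<open>\<beta> = 1 \<or> \<beta> = -1\<close>
proof
  assume "\<beta> = 1"
  thus ?thesis by (simp add: mpow_def V)
next
  assume "\<beta> = -1"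
  define K where "K = mat 1 + \<alpha> *\<^sub>R (transpose Z ** matrix_inv A ** Z)"
  define T where "T = matrix_inv (msqrt K)"
  have "pos_def K" unfolding K_def using assms(1-3) by (rule pos_def_capacitance)
  have "sym_mat T" unfolding T_def
    using \<open>pos_def K\<close> by (simp add: sym_mat_matrix_inv invertible_msqrt pos_semidef_sym pos_semidef_msqrt
        pos_def_imp_pos_semidef)
  have "T ** T = matrix_inv K"
    using \<open>pos_def K\<close> by (simp add: T_def matrix_inv_mult[symmetric] invertible_msqrt msqrt_square
        pos_def_imp_pos_semidef)
  hence "M ** T ** T = M ** matrix_inv K" for M :: "real^'k^'n" by (simp add: matrix_mul_assoc[symmetric])
  moreover have "sym_mat (matrix_inv A)"
    using pdA by (simp add: sym_mat_matrix_inv pos_def_invertible pos_def_def)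
  ultimately have "V ** transpose V = matrix_inv A ** Z ** matrix_inv K ** transpose Z ** matrix_inv A"
    using \<open>sym_mat T\<close> \<open>\<beta> = -1\<close>
    by (simp add: V K_def[symmetric] T_def[symmetric] matrix_transpose_mul matrix_mul_assoc sym_mat_def)
  moreover have "invertible K" using \<open>pos_def K\<close> by (rule pos_def_invertible)
  ultimately show ?thesis
    using \<open>\<beta> = -1\<close> woodbury_matrix_identity[OF pos_def_invertible[OF pdA]]
    by (simp add: mpow_def K_def)
qed

lemma square_diff_eq_scaled_residual:
  fixes X H W C :: "real^'n^'n"
  assumes X: "X ** X = H ** H + \<gamma> *\<^sub>R W" and "\<gamma> * \<gamma> = 1"
  shows "X ** X - (H + \<gamma> *\<^sub>R C) ** (H + \<gamma> *\<^sub>R C) = \<gamma> *\<^sub>R (W - H ** C - C ** H - \<gamma> *\<^sub>R (C ** C))"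
proof -
  have "(X ** X - (H + \<gamma> *\<^sub>R C) ** (H + \<gamma> *\<^sub>R C)) *v x
      = (\<gamma> *\<^sub>R (W - H ** C - C ** H - \<gamma> *\<^sub>R (C ** C))) *v x" for x
    using \<open>\<gamma> * \<gamma> = 1\<close> unfolding X
    by (simp add: matrix_vector_mult_add_rdistrib matrix_vector_mult_diff_rdistrib
        scaleR_matrix_vector_assoc[symmetric] matrix_vector_mul_assoc[symmetric] matrix_vector_right_distrib
        matrix_vector_mult_scaleR algebra_simps)
  thus ?thesis by (simp add: matrix_eq)
qed

theorem corollary7:
  fixes A :: "real^'n^'n" and Z :: "real^'k^'n" and \<alpha> \<beta> :: real
    and V :: "real^'k^'n" and Ct :: "real^'n^'n" and R :: "real^'n^'n \<Rightarrow> real^'n^'n"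
  assumes symA: "sym_mat A"
    and alpha: "\<alpha> = 1 \<or> \<alpha> = -1"
    and beta: "\<beta> = 1 \<or> \<beta> = -1"
    and pdA: "pos_def A"
    and pdAZ: "pos_def (A + \<alpha> *\<^sub>R (Z ** transpose Z))"
    and V_def: "V = (if \<beta> = 1 then Z
        else matrix_inv A ** Z **
          matrix_inv (msqrt (mat 1 + \<alpha> *\<^sub>R (transpose Z ** matrix_inv A ** Z))))"
    and R_def: "\<And>C. R C = V ** transpose V - mpow_half \<beta> A ** C - C ** mpow_half \<beta> A
                          - (\<alpha> * \<beta>) *\<^sub>R (C ** C)"
    and psdC: "pos_semidef Ct"
    and pdC: "pos_def (mpow_half \<beta> A + (\<alpha> * \<beta>) *\<^sub>R Ct)"
  shows "frob_norm (mpow_half \<beta> (A + \<alpha> *\<^sub>R (Z ** transpose Z)) - (mpow_half \<beta> A + (\<alpha> * \<beta>) *\<^sub>R Ct))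
           \<le> sqrt (sqrt (real CARD('n)) * frob_norm (R Ct))
         \<and> spec_norm (mpow_half \<beta> (A + \<alpha> *\<^sub>R (Z ** transpose Z)) - (mpow_half \<beta> A + (\<alpha> * \<beta>) *\<^sub>R Ct))
           \<le> min (frob_norm (R Ct) / sqrt (lambda_min (mpow \<beta> (A + \<alpha> *\<^sub>R (Z ** transpose Z)))))
                 (sqrt (sqrt (real CARD('n)) * frob_norm (R Ct)))"
proof -
  define P where "P = A + \<alpha> *\<^sub>R (Z ** transpose Z)"
  define X where "X = mpow_half \<beta> P"
  define Y where "Y = mpow_half \<beta> A + (\<alpha> * \<beta>) *\<^sub>R Ct"
  have "(\<alpha> * \<beta>) * (\<alpha> * \<beta>) = 1" and "\<bar>\<alpha> * \<beta>\<bar> = 1" using alpha beta by auto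
  have "X ** X = mpow_half \<beta> A ** mpow_half \<beta> A + (\<alpha> * \<beta>) *\<^sub>R (V ** transpose V)"
    using mpow_rank_update[OF pdA pdAZ alpha beta V_def] pdA pdAZ
    by (simp add: X_def P_def mpow_half_square)
  hence "X ** X - Y ** Y = (\<alpha> * \<beta>) *\<^sub>R R Ct"
    unfolding Y_def R_def by (rule square_diff_eq_scaled_residual) fact
  hence residual: "frob_norm (X ** X - Y ** Y) = frob_norm (R Ct)"
    using \<open>\<bar>\<alpha> * \<beta>\<bar> = 1\<close> by (simp add: frob_norm_scaleR)
  have "pos_semidef X" "invertible X" and "X ** X = mpow \<beta> P"
    using pdAZ by (simp_all add: X_def P_def pos_semidef_mpow_half invertible_mpow_half mpow_half_square)
  moreover have "pos_semidef Y" unfolding Y_def using pdC by (rule pos_def_imp_pos_semidef)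
  ultimately have frob: "frob_norm (X - Y) \<le> sqrt (sqrt (real CARD('n)) * frob_norm (R Ct))"
    and "spec_norm (X - Y) \<le> frob_norm (R Ct) / sqrt (lambda_min (mpow \<beta> P))"
    using frob_norm_diff_le_square_diff spec_norm_diff_le_square_diff residual by metis+
  moreover have "spec_norm (X - Y) \<le> sqrt (sqrt (real CARD('n)) * frob_norm (R Ct))"
    using spec_norm_le_frob_norm[of "X - Y"] frob by linarith
  ultimately show ?thesis unfolding X_def Y_def P_def by simp
qed

end
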